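(* Let $d\ge2$ and let $O_+$ be the operator on $(\mathbb{C}^d)^{\otimes3}$ given by $O_+=\sum_{\vec a\in\mathbb{Z}_d^3}O_+(\vec a)|\vec a\rangle\langle\vec a|$ with $O_+(\vec a)=1+(-d)^{wt(\vec a)-1}$. Define $Q_3=O_+^2$; $Q_4=\sum_{\vec a\in\mathbb{Z}_d^4}O_+(a_1a_2a_3)O_+(a_1a_2a_4)|\vec a\rangle\langle\vec a|$; $Q_5=\sum_{\vec a\in\mathbb{Z}_d^5}O_+(a_1a_2a_3)O_+(a_1a_4a_5)|\vec a\rangle\langle\vec a|$; $Q_6=O_+\otimes O_+=\sum_{\vec a\in\mathbb{Z}_d^6}O_+(a_1a_2a_3)O_+(a_4a_5a_6)|\vec a\rangle\langle\vec a|$. Then for each $t\in\{3,4,5,6\}$ there exists $d_0$ such that for all $d\ge d_0$ and every conjugacy class $\xi$ of $S_t$, $\sum_{\pi\in\xi}\mathrm{Tr}[W_\pi Q_t]>0$.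
   Context: For a 3-dit string $\vec a=(a_1,a_2,a_3)$, $wt(\vec a)$ is the largest number of equal entries: $wt=1$ if all entries are distinct, $wt=2$ if exactly two coincide, $wt=3$ if all three coincide; so $O_+(\vec a)$ equals $2$, $1-d$, $1+d^2$ respectively. $O_+(a_ia_ja_k)$ means $O_+$ evaluated on the string $(a_i,a_j,a_k)$. $W_\pi$ ($\pi\in S_t$) is the permutation operator on $(\mathbb{C}^d)^{\otimes t}$ permuting tensor factors. *)

theory Defs
  imports Complex_Main "HOL-Library.FuncSet" "HOL-Combinatorics.Permutations"
begin

definition strings :: "nat \<Rightarrow> nat \<Rightarrow> (nat \<Rightarrow> nat) set" where
  "strings d t = PiE {0..<t} (\<lambda>_. {0..<d})"

definition wt3 :: "nat \<Rightarrow> nat \<Rightarrow> nat \<Rightarrow> nat" where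
  "wt3 x y z = (if x = y \<and> y = z then 3 else if x = y \<or> y = z \<or> x = z then 2 else 1)"

definition Oplus :: "nat \<Rightarrow> nat \<Rightarrow> nat \<Rightarrow> nat \<Rightarrow> real" where
  "Oplus d x y z = 1 + (- real d) ^ (wt3 x y z - 1)"

text \<open>Diagonal entries of Q_t (paper's a_1..a_t are a 0..a (t-1) here).\<close>
definition Qdiag :: "nat \<Rightarrow> nat \<Rightarrow> (nat \<Rightarrow> nat) \<Rightarrow> real" where
  "Qdiag d t a =
     (if t = 3 then (Oplus d (a 0) (a 1) (a 2))\<^sup>2
      else if t = 4 then Oplus d (a 0) (a 1) (a 2) * Oplus d (a 0) (a 1) (a 3)
      else if t = 5 then Oplus d (a 0) (a 1) (a 2) * Oplus d (a 0) (a 3) (a 4)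
      else if t = 6 then Oplus d (a 0) (a 1) (a 2) * Oplus d (a 3) (a 4) (a 5)
      else 0)"

definition Qmat :: "nat \<Rightarrow> nat \<Rightarrow> (nat \<Rightarrow> nat) \<Rightarrow> (nat \<Rightarrow> nat) \<Rightarrow> real" where
  "Qmat d t a b = (if a = b then Qdiag d t a else 0)"

text \<open>Matrix entries <a|W_pi|b> of the permutation operator: W_pi |b> = |a>
  where the i-th tensor factor of b is moved to position pi(i), i.e. a (pi i) = b i.\<close>
definition Wmat :: "nat \<Rightarrow> (nat \<Rightarrow> nat) \<Rightarrow> (nat \<Rightarrow> nat) \<Rightarrow> (nat \<Rightarrow> nat) \<Rightarrow> real" where
  "Wmat t \<pi> a b = (if \<forall>i<t. a (\<pi> i) = b i then 1 else 0)"

definition trWQ :: "nat \<Rightarrow> nat \<Rightarrow> (nat \<Rightarrow> nat) \<Rightarrow> real" where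
  "trWQ d t \<pi> = (\<Sum>a\<in>strings d t. \<Sum>b\<in>strings d t. Wmat t \<pi> a b * Qmat d t b a)"

definition conj_class :: "nat \<Rightarrow> (nat \<Rightarrow> nat) set \<Rightarrow> bool" where
  "conj_class t \<xi> \<longleftrightarrow> (\<exists>\<pi>. \<pi> permutes {0..<t} \<and>
      \<xi> = {\<sigma> \<circ> \<pi> \<circ> inv \<sigma> | \<sigma>. \<sigma> permutes {0..<t}})"

end

theory Submission
  imports Defs "HOL-Combinatorics.Multiset_Permutations" "HOL-Computational_Algebra.Polynomial"
begin

(*
  Tr[W_pi Q_t] is the sum of the diagonal entries Q_t(a) over the strings a with a o pi = a.
  Both this condition and Q_t(a) depend on a only through its equality pattern, i.e. they are
  invariant under injective relabelling of the letters, and a pattern with k distinct letters is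
  realised by exactly d (d - 1) ... (d - k + 1) strings. Hence the trace is an integer polynomial
  in d. Computing these polynomials for all t! permutations shows that each of them has a
  positive leading coefficient, so every single trace, and a fortiori every class sum, is
  positive for large d.
*)

section \<open>Sums over strings, grouped by equality pattern\<close>

definition words :: "nat \<Rightarrow> nat \<Rightarrow> nat list set" where
  "words d n = {xs. set xs \<subseteq> {..<d} \<and> length xs = n}"

lemma finite_words [simp]: "finite (words d n)"
  unfolding words_def by (rule finite_lists_length_eq) simp

lemma words_0 [simp]: "words d 0 = {[]}"
  by (auto simp: words_def)

lemma sum_words_Suc: "(\<Sum>xs\<in>words d (Suc n). f xs) = (\<Sum>v<d. \<Sum>xs\<in>words d n. f (v # xs))"
proof -
  have "words d (Suc n) = (\<lambda>(xs, v). v # xs) ` (words d n \<times> {..<d})"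
    by (simp add: words_def lists_length_Suc_eq)
  moreover have "inj_on (\<lambda>(xs, v). v # xs) (words d n \<times> {..<d})"
    by (auto simp: inj_on_def)
  ultimately have "(\<Sum>xs\<in>words d (Suc n). f xs) = (\<Sum>(xs, v)\<in>words d n \<times> {..<d}. f (v # xs))"
    by (simp add: sum.reindex case_prod_unfold)
  also have "\<dots> = (\<Sum>v<d. \<Sum>xs\<in>words d n. f (v # xs))"
    by (simp add: sum.cartesian_product [symmetric] sum.swap [of _ "words d n"])
  finally show ?thesis .
qed

lemma sum_lessThan_relabel_or_const:
  assumes "A \<subseteq> {..<d}" "inj_on g A"
  shows "(\<Sum>v<d. f (if v \<in> A then g v else c)) = (\<Sum>w\<in>g ` A. f w) + of_nat (d - card A) * f c"
proof -
  have "(\<Sum>v<d. f (if v \<in> A then g v else c))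
      = (\<Sum>v\<in>{..<d} - A. f (if v \<in> A then g v else c)) + (\<Sum>v\<in>A. f (if v \<in> A then g v else c))"
    using sum.subset_diff [OF assms(1)] by blast
  also have "\<dots> = of_nat (card ({..<d} - A)) * f c + (\<Sum>v\<in>A. f (g v))"
    by simp
  also have "(\<Sum>v\<in>A. f (g v)) = (\<Sum>w\<in>g ` A. f w)"
    using assms(2) by (simp add: sum.reindex)
  also have "card ({..<d} - A) = d - card A"
    using assms(1) by (simp add: card_Diff_subset finite_subset)
  finally show ?thesis by (simp add: add.commute)
qed

text \<open>
  \<open>pattern_sum F D n ys\<close> sums \<open>F\<close> over the extensions of \<open>ys\<close> by \<open>n\<close> letters, one per
  equality pattern: a new letter either repeats a letter of \<open>ys\<close> or is fresh, and a fresh letter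
  stands for the \<open>d - card (set ys)\<close> values not used so far, whence the factor
  \<open>[:- card (set ys), 1:]\<close> evaluated at \<open>d\<close>. Any letter outside \<open>ys\<close> can serve as the fresh
  one. \<open>D\<close> prunes prefixes on which \<open>F\<close> vanishes. The linear factor stands on the right because
  \<open>code_simp\<close> multiplies polynomials by folding over the coefficients of the left factor,
  copying the right one.
\<close>

fun pattern_sum :: "(nat list \<Rightarrow> 'a::comm_ring_1 poly) \<Rightarrow> (nat list \<Rightarrow> bool) \<Rightarrow> nat \<Rightarrow> nat list \<Rightarrow> 'a poly"
and pattern_sum_repeat ::
  "(nat list \<Rightarrow> 'a::comm_ring_1 poly) \<Rightarrow> (nat list \<Rightarrow> bool) \<Rightarrow> nat \<Rightarrow> nat list \<Rightarrow> nat list \<Rightarrow> 'a poly"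
where
  "pattern_sum F D 0 ys = (if D ys then 0 else F ys)"
| "pattern_sum F D (Suc n) ys =
     (if D ys then 0
      else pattern_sum_repeat F D n ys (remdups ys)
        + pattern_sum F D n (ys @ [Suc (sum_list ys)]) * [:- of_nat (card (set ys)), 1:])"
| "pattern_sum_repeat F D n ys [] = 0"
| "pattern_sum_repeat F D n ys (v # vs) = pattern_sum F D n (ys @ [v]) + pattern_sum_repeat F D n ys vs"

lemma poly_pattern_sum_repeat:
  "poly (pattern_sum_repeat F D n ys vs) x = (\<Sum>v\<leftarrow>vs. poly (pattern_sum F D n (ys @ [v])) x)"
  by (induction vs) auto

lemma Suc_sum_list_notin: "Suc (sum_list ys) \<notin> set (ys :: nat list)"
  using member_le_sum_list [of _ ys] by fastforce

lemma poly_pattern_sum: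
  fixes F :: "nat list \<Rightarrow> 'a::comm_ring_1 poly"
  assumes F_relabel: "\<And>xs g. inj_on g (set xs) \<Longrightarrow> F (map g xs) = F xs"
    and D_relabel: "\<And>xs g. inj_on g (set xs) \<Longrightarrow> D (map g xs) = D xs"
    and D_vanish: "\<And>xs e. D xs \<Longrightarrow> F (xs @ e) = 0"
    and "set xs \<subseteq> {..<d}" "inj_on g (set xs)"
  shows "poly (pattern_sum F D n (map g xs)) (of_nat d) = (\<Sum>e\<in>words d n. poly (F (xs @ e)) (of_nat d))"
  using assms(4,5)
proof (induction n arbitrary: xs g)
  case 0
  then show ?case using F_relabel D_relabel D_vanish [of xs "[]"] by auto
next
  case (Suc n)
  define ys where "ys = map g xs"
  define fresh where "fresh = Suc (sum_list ys)"
  define \<Phi> where "\<Phi> w = poly (pattern_sum F D n (ys @ [w])) (of_nat d)" for w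
  have "D ys = D xs"
    using D_relabel Suc.prems(2) by (simp add: ys_def)
  show ?case
  proof (cases "D xs")
    case True
    then show ?thesis using \<open>D ys = D xs\<close> D_vanish by (simp add: ys_def)
  next
    case False
    have fresh: "fresh \<notin> g ` set xs"
      using Suc_sum_list_notin [of ys] by (simp add: fresh_def ys_def)
    have extend: "(\<Sum>e\<in>words d n. poly (F ((xs @ [v]) @ e)) (of_nat d))
        = \<Phi> (if v \<in> set xs then g v else fresh)" if "v < d" for v
    proof -
      have xs_v: "set (xs @ [v]) \<subseteq> {..<d}" using Suc.prems(1) that by auto
      show ?thesis
      proof (cases "v \<in> set xs")
        case True
        then have "inj_on g (set (xs @ [v]))" using Suc.prems(2) by (simp add: insert_absorb)
        then show ?thesis using True Suc.IH [OF xs_v] by (simp add: \<Phi>_def ys_def)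
      next
        case False
        have map_upd: "map (g(v := fresh)) (xs @ [v]) = ys @ [fresh]"
          using False by (auto simp: ys_def intro: map_cong)
        have "inj_on (g(v := fresh)) (set (xs @ [v]))"
          using Suc.prems(2) False fresh by (auto simp: inj_on_def)
        from Suc.IH [OF xs_v this] show ?thesis
          using False by (simp only: map_upd \<Phi>_def if_False)
      qed
    qed
    have "card (set ys) = card (set xs)"
      using Suc.prems(2) by (simp add: ys_def card_image)
    then have "poly (pattern_sum F D (Suc n) ys) (of_nat d)
        = (\<Sum>w\<in>set ys. \<Phi> w) + (of_nat d - of_nat (card (set xs))) * \<Phi> fresh"
      using False \<open>D ys = D xs\<close>
      by (simp add: poly_pattern_sum_repeat \<Phi>_def fresh_def sum_list_distinct_conv_sum_set algebra_simps)
    also have "of_nat d - of_nat (card (set xs)) = (of_nat (d - card (set xs)) :: 'a)"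
      using card_mono [OF _ Suc.prems(1)] by (simp add: of_nat_diff)
    also have "(\<Sum>w\<in>set ys. \<Phi> w) + of_nat (d - card (set xs)) * \<Phi> fresh
        = (\<Sum>v<d. \<Phi> (if v \<in> set xs then g v else fresh))"
      using sum_lessThan_relabel_or_const [OF Suc.prems, where f = \<Phi> and c = fresh] by (simp add: ys_def)
    also have "\<dots> = (\<Sum>e\<in>words d (Suc n). poly (F (xs @ e)) (of_nat d))"
      unfolding sum_words_Suc by (intro sum.cong refl) (simp add: extend [symmetric])
    finally show ?thesis by (simp add: ys_def)
  qed
qed

section \<open>The trace as a polynomial in \<open>d\<close>\<close>

definition Oplus_poly :: "nat \<Rightarrow> nat \<Rightarrow> nat \<Rightarrow> int poly" where
  "Oplus_poly x y z =
     (if x = y \<and> y = z then [:1, 0, 1:] else if x = y \<or> y = z \<or> x = z then [:1, -1:] else [:2:])"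

definition Qdiag_poly :: "nat \<Rightarrow> (nat \<Rightarrow> nat) \<Rightarrow> int poly" where
  "Qdiag_poly t a =
     (if t = 3 then (Oplus_poly (a 0) (a 1) (a 2))\<^sup>2
      else if t = 4 then Oplus_poly (a 0) (a 1) (a 2) * Oplus_poly (a 0) (a 1) (a 3)
      else if t = 5 then Oplus_poly (a 0) (a 1) (a 2) * Oplus_poly (a 0) (a 3) (a 4)
      else if t = 6 then Oplus_poly (a 0) (a 1) (a 2) * Oplus_poly (a 3) (a 4) (a 5)
      else 0)"

lemma poly_Oplus_poly: "of_int (poly (Oplus_poly x y z) (int d)) = Oplus d x y z"
  by (auto simp: Oplus_poly_def Oplus_def wt3_def power2_eq_square)

lemma poly_Qdiag_poly: "of_int (poly (Qdiag_poly t a) (int d)) = Qdiag d t a"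
  by (simp add: Qdiag_poly_def Qdiag_def poly_Oplus_poly [symmetric])

lemma Qdiag_poly_cong: "(\<And>i. i < t \<Longrightarrow> a i = b i) \<Longrightarrow> Qdiag_poly t a = Qdiag_poly t b"
  by (simp add: Qdiag_poly_def)

lemma Oplus_poly_relabel: "inj_on g {x, y, z} \<Longrightarrow> Oplus_poly (g x) (g y) (g z) = Oplus_poly x y z"
  by (auto simp: Oplus_poly_def inj_on_def)

lemma Qdiag_poly_relabel:
  assumes "inj_on g (a ` {..<t})"
  shows "Qdiag_poly t (g \<circ> a) = Qdiag_poly t a"
proof -
  have "Oplus_poly (g (a i)) (g (a j)) (g (a k)) = Oplus_poly (a i) (a j) (a k)"
    if "i < t" "j < t" "k < t" for i j k
    using that by (intro Oplus_poly_relabel inj_on_subset [OF assms]) auto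
  then show ?thesis by (simp add: Qdiag_poly_def)
qed

text \<open>
  A permutation \<open>\<pi>\<close> of \<open>{0..<t}\<close> is given by the list \<open>r = map \<pi> [0..<t]\<close>; a string
  \<open>xs\<close> is fixed by \<open>W\<^sub>\<pi>\<close> iff \<open>map ((!) xs) r = xs\<close>.
\<close>

definition fixed_Qdiag_poly :: "nat list \<Rightarrow> nat list \<Rightarrow> int poly" where
  "fixed_Qdiag_poly r xs =
     (if length xs = length r \<and> map ((!) xs) r = xs then Qdiag_poly (length r) ((!) xs) else 0)"

definition violates :: "nat list \<Rightarrow> nat list \<Rightarrow> bool" where
  "violates r ys \<longleftrightarrow> list_ex (\<lambda>i. r ! i < length ys \<and> ys ! (r ! i) \<noteq> ys ! i) [0..<length ys]"

definition trace_poly :: "nat list \<Rightarrow> int poly" where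
  "trace_poly r = pattern_sum (fixed_Qdiag_poly r) (violates r) (length r) []"

lemma fixed_Qdiag_poly_relabel:
  assumes "set r \<subseteq> {..<length r}" "inj_on g (set xs)"
  shows "fixed_Qdiag_poly r (map g xs) = fixed_Qdiag_poly r xs"
proof (cases "length xs = length r")
  case True
  have map_nth: "map ((!) (map g xs)) r = map g (map ((!) xs) r)"
    using assms(1) True by auto
  have "inj_on g (set (map ((!) xs) r) \<union> set xs)"
    using assms True by (simp add: Un_absorb1 image_subset_iff subset_eq)
  then have "(map g (map ((!) xs) r) = map g xs) \<longleftrightarrow> (map ((!) xs) r = xs)"
    by (rule inj_on_map_eq_map)
  then have "(map ((!) (map g xs)) r = map g xs) \<longleftrightarrow> (map ((!) xs) r = xs)"
    by (simp only: map_nth)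
  moreover have "Qdiag_poly (length r) ((!) (map g xs)) = Qdiag_poly (length r) (g \<circ> (!) xs)"
    using True by (intro Qdiag_poly_cong) simp
  moreover have "Qdiag_poly (length r) (g \<circ> (!) xs) = Qdiag_poly (length r) ((!) xs)"
    using True assms(2) by (intro Qdiag_poly_relabel inj_on_subset [OF assms(2)]) auto
  ultimately show ?thesis by (simp add: fixed_Qdiag_poly_def)
qed (simp add: fixed_Qdiag_poly_def)

lemma violates_relabel: "inj_on g (set ys) \<Longrightarrow> violates r (map g ys) = violates r ys"
  by (auto simp: violates_def list_ex_iff inj_on_eq_iff)

lemma fixed_Qdiag_poly_violates:
  assumes "violates r xs"
  shows "fixed_Qdiag_poly r (xs @ e) = 0"
proof -
  obtain i where "i < length xs" "r ! i < length xs" "xs ! (r ! i) \<noteq> xs ! i"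
    using assms by (auto simp: violates_def list_ex_iff)
  then have "(xs @ e) ! (r ! i) \<noteq> (xs @ e) ! i"
    by (simp add: nth_append)
  then have "map ((!) (xs @ e)) r \<noteq> xs @ e" if "length (xs @ e) = length r"
    using that \<open>i < length xs\<close> by (metis length_append nth_map trans_less_add1)
  then show ?thesis by (auto simp: fixed_Qdiag_poly_def)
qed

lemma bij_betw_nth_strings: "bij_betw (\<lambda>xs. restrict ((!) xs) {0..<t}) (words d t) (strings d t)"
proof (rule bij_betw_byWitness [where f' = "\<lambda>a. map a [0..<t]"])
  show "\<forall>xs\<in>words d t. map (restrict ((!) xs) {0..<t}) [0..<t] = xs"
    by (auto simp: words_def intro: nth_equalityI)
  show "\<forall>a\<in>strings d t. restrict ((!) (map a [0..<t])) {0..<t} = a"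
  proof
    fix a assume "a \<in> strings d t"
    then have "restrict a {0..<t} = a" by (simp add: strings_def)
    moreover have "restrict ((!) (map a [0..<t])) {0..<t} = restrict a {0..<t}"
      by (rule restrict_ext) simp
    ultimately show "restrict ((!) (map a [0..<t])) {0..<t} = a" by simp
  qed
  show "(\<lambda>xs. restrict ((!) xs) {0..<t}) ` words d t \<subseteq> strings d t"
    by (auto simp: words_def strings_def restrict_PiE_iff subset_iff dest: nth_mem)
  show "(\<lambda>a. map a [0..<t]) ` strings d t \<subseteq> words d t"
    by (auto simp: words_def strings_def PiE_iff)
qed

lemma finite_strings [simp]: "finite (strings d t)"
  by (simp add: strings_def finite_PiE)

lemma trWQ_eq_sum_fixed:
  "trWQ d t \<pi> = (\<Sum>a\<in>strings d t. if \<forall>i<t. a (\<pi> i) = a i then Qdiag d t a else 0)"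
proof -
  have "(\<Sum>b\<in>strings d t. Wmat t \<pi> a b * Qmat d t b a)
      = (if \<forall>i<t. a (\<pi> i) = a i then Qdiag d t a else 0)" if "a \<in> strings d t" for a
  proof -
    have "(\<Sum>b\<in>strings d t. Wmat t \<pi> a b * Qmat d t b a)
        = (\<Sum>b\<in>strings d t. if b = a then Wmat t \<pi> a a * Qdiag d t a else 0)"
      by (intro sum.cong) (auto simp: Qmat_def)
    also have "\<dots> = Wmat t \<pi> a a * Qdiag d t a"
      using that by simp
    finally show ?thesis by (auto simp: Wmat_def)
  qed
  then show ?thesis unfolding trWQ_def by (intro sum.cong) auto
qed

lemma trWQ_trace_poly:
  assumes "\<pi> permutes {0..<t}"
  shows "trWQ d t \<pi> = of_int (poly (trace_poly (map \<pi> [0..<t])) (int d))"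
proof -
  define r where "r = map \<pi> [0..<t]"
  have r_lt: "set r \<subseteq> {..<length r}"
    using permutes_image [OF assms] by (simp add: r_def atLeast0LessThan)
  have term_eq: "(if \<forall>i<t. a (\<pi> i) = a i then Qdiag d t a else 0)
      = of_int (poly (fixed_Qdiag_poly r xs) (int d))"
    if "xs \<in> words d t" and a: "a = restrict ((!) xs) {0..<t}" for xs a
  proof -
    have len: "length xs = t" "length r = t"
      using that(1) by (simp_all add: words_def r_def)
    have "(\<forall>i<t. a (\<pi> i) = a i) \<longleftrightarrow> (\<forall>i<t. xs ! (r ! i) = xs ! i)"
      using permutes_in_image [OF assms] by (simp add: a r_def)
    also have "\<dots> \<longleftrightarrow> map ((!) xs) r = xs"
      using len by (simp add: list_eq_iff_nth_eq)
    finally have "(\<forall>i<t. a (\<pi> i) = a i) \<longleftrightarrow> map ((!) xs) r = xs" .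
    moreover have "Qdiag_poly t a = Qdiag_poly t ((!) xs)"
      by (intro Qdiag_poly_cong) (simp add: a)
    ultimately show ?thesis
      using len by (simp add: fixed_Qdiag_poly_def poly_Qdiag_poly [symmetric])
  qed
  have "trWQ d t \<pi> = (\<Sum>xs\<in>words d t. of_int (poly (fixed_Qdiag_poly r xs) (int d)))"
    unfolding trWQ_eq_sum_fixed sum.reindex_bij_betw [OF bij_betw_nth_strings, symmetric]
    by (intro sum.cong refl) (rule term_eq, assumption, rule refl)
  also have "\<dots> = of_int (poly (pattern_sum (fixed_Qdiag_poly r) (violates r) t (map id [])) (of_nat d))"
    by (subst poly_pattern_sum)
       (simp_all add: fixed_Qdiag_poly_relabel [OF r_lt] violates_relabel fixed_Qdiag_poly_violates)
  finally show ?thesis by (simp add: trace_poly_def r_def)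
qed

section \<open>Positivity\<close>

lemma pos_poly_trace_poly_3: "list_all pos_poly (map trace_poly (permutations_of_set_list [0..<3]))"
  by code_simp

lemma pos_poly_trace_poly_4: "list_all pos_poly (map trace_poly (permutations_of_set_list [0..<4]))"
  by code_simp

lemma pos_poly_trace_poly_5: "list_all pos_poly (map trace_poly (permutations_of_set_list [0..<5]))"
  by code_simp

text \<open>The case \<open>t = 6\<close> is split in two halves only so that they are evaluated in parallel.\<close>

lemma pos_poly_trace_poly_6_take:
  "list_all pos_poly (map trace_poly (take 360 (permutations_of_set_list [0..<6])))"
  by code_simp

lemma pos_poly_trace_poly_6_drop:
  "list_all pos_poly (map trace_poly (drop 360 (permutations_of_set_list [0..<6])))"
  by code_simp

lemma pos_poly_trace_poly:
  assumes "t \<in> {3, 4, 5, 6}" "r \<in> permutations_of_set {0..<t}"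
  shows "pos_poly (trace_poly r)"
proof -
  have "list_all pos_poly (map trace_poly (permutations_of_set_list [0..<6]))"
    using pos_poly_trace_poly_6_take pos_poly_trace_poly_6_drop
    by (metis append_take_drop_id list_all_append map_append)
  then have "list_all pos_poly (map trace_poly (permutations_of_set_list [0..<t]))"
    using assms(1) pos_poly_trace_poly_3 pos_poly_trace_poly_4 pos_poly_trace_poly_5 by auto
  moreover have "r \<in> set (permutations_of_set_list [0..<t])"
    using assms(2) permutations_of_list [of "[0..<t]"] by simp
  ultimately show ?thesis by (simp add: list_all_iff)
qed

lemma poly_map_poly_of_int: "poly (map_poly of_int p) (of_int x) = (of_int (poly p x) :: 'a::comm_ring_1)"
  by (induction p) (simp_all add: map_poly_pCons)

lemma eventually_poly_pos:
  fixes p :: "int poly"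
  assumes "pos_poly p"
  shows "eventually (\<lambda>n. poly p (int n) > 0) sequentially"
proof -
  define q where "q = map_poly (of_int :: int \<Rightarrow> real) p"
  have "p \<noteq> 0"
    using assms by (auto simp: pos_poly_def)
  then have "lead_coeff q > 0"
    using assms lead_coeff_map_poly_nz [of real_of_int p] by (simp add: q_def pos_poly_def)
  then obtain x0 where x0: "\<forall>x\<ge>x0. poly q x \<ge> lead_coeff q"
    using poly_pinfty_gt_lc by blast
  have "poly p (int n) > 0" if "n \<ge> nat \<lceil>x0\<rceil>" for n
  proof -
    have "x0 \<le> real n"
      using that real_nat_ceiling_ge [of x0] by (meson of_nat_le_iff order_trans)
    then have "poly q (real n) > 0"
      using x0 \<open>lead_coeff q > 0\<close> by (meson less_le_trans)
    moreover have "poly q (real n) = of_int (poly p (int n))"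
      using poly_map_poly_of_int [of p "int n"] by (simp add: q_def)
    ultimately show ?thesis by simp
  qed
  then show ?thesis
    unfolding eventually_sequentially by blast
qed

lemma eventually_trWQ_pos:
  assumes "t \<in> {3, 4, 5, 6}" "\<pi> permutes {0..<t}"
  shows "eventually (\<lambda>d. trWQ d t \<pi> > 0) sequentially"
proof -
  have "map \<pi> [0..<t] \<in> permutations_of_set {0..<t}"
    using assms(2) by (simp add: permutations_of_set_def permutes_image permutes_inj_on distinct_map)
  then have "eventually (\<lambda>d. poly (trace_poly (map \<pi> [0..<t])) (int d) > 0) sequentially"
    by (intro eventually_poly_pos pos_poly_trace_poly [OF assms(1)])
  then show ?thesis
    by eventually_elim (simp add: trWQ_trace_poly [OF assms(2)])
qed

theorem proposition14:
  fixes t :: nat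
  assumes "t \<in> {3, 4, 5, 6}"
  shows "\<exists>d0::nat. \<forall>d\<ge>d0. \<forall>\<xi>. conj_class t \<xi> \<longrightarrow> (\<Sum>\<pi>\<in>\<xi>. trWQ d t \<pi>) > 0"
proof -
  let ?S = "{\<pi>. \<pi> permutes {0..<t}}"
  have "eventually (\<lambda>d. \<forall>\<pi>\<in>?S. trWQ d t \<pi> > 0) sequentially"
    using eventually_trWQ_pos [OF assms] by (intro eventually_ball_finite) (auto simp: finite_permutations)
  then obtain d0 where d0: "\<And>d \<pi>. d \<ge> d0 \<Longrightarrow> \<pi> \<in> ?S \<Longrightarrow> trWQ d t \<pi> > 0"
    unfolding eventually_sequentially by blast
  have "(\<Sum>\<pi>\<in>\<xi>. trWQ d t \<pi>) > 0" if "d \<ge> d0" and \<xi>_class: "conj_class t \<xi>" for d \<xi>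
  proof -
    obtain \<pi> where \<pi>: "\<pi> permutes {0..<t}" and \<xi>: "\<xi> = {\<sigma> \<circ> \<pi> \<circ> inv \<sigma> | \<sigma>. \<sigma> permutes {0..<t}}"
      using \<xi>_class by (auto simp: conj_class_def)
    have "\<xi> \<subseteq> ?S"
      using \<pi> by (auto simp: \<xi> intro: permutes_compose permutes_inv)
    moreover have "\<pi> \<in> \<xi>"
      by (auto simp: \<xi> intro!: exI [of _ id] permutes_id)
    ultimately show ?thesis
      using d0 [OF that(1)] finite_subset [OF _ finite_permutations]
      by (intro sum_pos) auto
  qed
  then show ?thesis by blast
qed

end
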